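(* Let $G=(V,E)$ be a simple undirected graph on $n$ nodes, let $0<\epsilon<\frac13$, $\delta>0$, $p\in(0,1)$, and let $D\subseteq V$ be an $\epsilon^3$-near clique with $|D|\ge\delta n$; let $C=K_{\epsilon^2}(D)\cap D$. Let $S=S^{(1)}\cup S^{(2)}$ be the random set where each node independently belongs to $S^{(1)}$ with probability $p_1=p/2$ and, independently, to $S^{(2)}$ with probability $p_2=\frac{p-p_1}{1-p_1}$ (so each node is in $S$ independently with probability $p$), and let $X^*=S^{(1)}\cap C$. Then $X^*$ is contained in a single connected component of $G[S]$ with probability at least $1-e^{-\Omega(\delta pn)}$.
   Context: $\Gamma(v)$ denotes the set of neighbors of $v$; $G[S]$ is the subgraph induced by $S$. For $Y\subseteq V$ and $0\le\eta\le1$: $K_\eta(Y)=\{v\in V: |\Gamma(v)\cap Y|\ge(1-\eta)|Y|\}$. Each undirected edge is counted as two directed edges; a set $D\subseteq V$ is a $\gamma$-near clique if $|\{(u,v)\in D\times D:\{u,v\}\in E\}|\ge(1-\gamma)|D|(|D|-1)$. $\Omega(\cdot)$ hides an absolute positive constant. *)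

theory Defs
  imports "HOL-Probability.Probability"
begin

definition simple_graph :: "'a set \<Rightarrow> ('a \<Rightarrow> 'a \<Rightarrow> bool) \<Rightarrow> bool" where
  "simple_graph V E \<longleftrightarrow> finite V \<and> (\<forall>u v. E u v \<longrightarrow> E v u)
     \<and> (\<forall>v. \<not> E v v) \<and> (\<forall>u v. E u v \<longrightarrow> u \<in> V \<and> v \<in> V)"

definition nbrs :: "'a set \<Rightarrow> ('a \<Rightarrow> 'a \<Rightarrow> bool) \<Rightarrow> 'a \<Rightarrow> 'a set" where
  "nbrs V E v = {u \<in> V. E v u}"

definition K_set :: "'a set \<Rightarrow> ('a \<Rightarrow> 'a \<Rightarrow> bool) \<Rightarrow> real \<Rightarrow> 'a set \<Rightarrow> 'a set" where
  "K_set V E \<eta> Y = {v \<in> V. real (card (nbrs V E v \<inter> Y)) \<ge> (1 - \<eta>) * real (card Y)}"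

text \<open>Each undirected edge counted as two directed (ordered) pairs.\<close>
definition near_clique :: "('a \<Rightarrow> 'a \<Rightarrow> bool) \<Rightarrow> real \<Rightarrow> 'a set \<Rightarrow> bool" where
  "near_clique E \<gamma> D \<longleftrightarrow>
     real (card {(u, v). u \<in> D \<and> v \<in> D \<and> E u v})
       \<ge> (1 - \<gamma>) * real (card D) * (real (card D) - 1)"

definition in_one_component :: "('a \<Rightarrow> 'a \<Rightarrow> bool) \<Rightarrow> 'a set \<Rightarrow> 'a set \<Rightarrow> bool" where
  "in_one_component E S X \<longleftrightarrow> X \<subseteq> S \<and>
     (\<forall>x\<in>X. \<forall>y\<in>X. (\<lambda>u v. u \<in> S \<and> v \<in> S \<and> E u v)\<^sup>*\<^sup>* x y)"

end

theory Submission imports Defs begin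

(* Two nodes of C each
   miss at most an eps^2-fraction of D, so they have at least 7|D|/9 common neighbours in D,
   and one of these in the first sample joins them by a path of length two inside S. A fixed
   pair of nodes of C lies in the first sample without such a common neighbour with
   probability at most p1^2 (1 - p1)^(7|D|/9); the union bound over the at most |D|^2/2 pairs
   gives t^2/8 * e^(-7t/18) <= e^(-t/18) for t = p|D| >= delta p n. *)

lemma prob_Pi_bernoulli_forced:
  assumes "finite V" "X \<subseteq> V" "Z \<subseteq> V" "X \<inter> Z = {}" "0 \<le> q" "q \<le> 1"
  shows "measure_pmf.prob (Pi_pmf V False (\<lambda>_. bernoulli_pmf q))
           {f. (\<forall>x\<in>X. f x) \<and> (\<forall>z\<in>Z. \<not> f z)} = q ^ card X * (1 - q) ^ card Z"
proof -
  define B where "B v = (if v \<in> X then {True} else if v \<in> Z then {False} else UNIV)" for v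
  have parts: "V \<inter> X = X" "(V - X) \<inter> Z = Z"
    using assms(2-4) by auto
  have "{f. (\<forall>x\<in>X. f x) \<and> (\<forall>z\<in>Z. \<not> f z)} = Pi V B"
    using assms(2-4) by (auto simp: B_def Pi_def)
  moreover have "measure_pmf.prob (bernoulli_pmf q) (B v) =
      (if v \<in> X then q else if v \<in> Z then 1 - q else 1)" for v
    using assms(5,6) by (auto simp: B_def measure_pmf_single)
  ultimately have "measure_pmf.prob (Pi_pmf V False (\<lambda>_. bernoulli_pmf q))
           {f. (\<forall>x\<in>X. f x) \<and> (\<forall>z\<in>Z. \<not> f z)}
      = (\<Prod>v\<in>V. if v \<in> X then q else if v \<in> Z then 1 - q else 1)"
    using assms(1) by (simp add: measure_Pi_pmf_Pi)
  also have "\<dots> = (\<Prod>v\<in>V \<inter> X. q) * (\<Prod>v\<in>(V - X) \<inter> Z. 1 - q)"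
    using assms(1) by (simp add: prod.If_cases Diff_eq)
  finally show ?thesis
    by (simp add: parts)
qed

lemma one_minus_power_le_exp:
  fixes q :: real
  assumes "q \<le> 1"
  shows "(1 - q) ^ k \<le> exp (- q * real k)"
proof -
  have "(1 - q) ^ k \<le> exp (- q) ^ k"
    using assms by (intro power_mono) (auto simp: exp_ge_add_one_self[of "-q", simplified])
  also have "\<dots> = exp (- q * real k)"
    by (simp add: exp_of_nat_mult[symmetric] mult.commute)
  finally show ?thesis .
qed

lemma card_common_nbrs_K_set:
  assumes "finite D" "D \<subseteq> V" "x \<in> K_set V E \<eta> D" "y \<in> K_set V E \<eta> D"
  shows "(1 - 2 * \<eta>) * real (card D) \<le> real (card {z \<in> D. E x z \<and> E y z})"
proof -
  define Nx where "Nx = nbrs V E x \<inter> D"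
  define Ny where "Ny = nbrs V E y \<inter> D"
  have "card Nx + card Ny = card (Nx \<union> Ny) + card (Nx \<inter> Ny)"
    using assms(1) by (intro card_Un_Int) (auto simp: Nx_def Ny_def)
  moreover have "card (Nx \<union> Ny) \<le> card D"
    using assms(1) by (intro card_mono) (auto simp: Nx_def Ny_def)
  moreover have "Nx \<inter> Ny = {z \<in> D. E x z \<and> E y z}"
    using assms(2) by (auto simp: Nx_def Ny_def nbrs_def)
  ultimately show ?thesis
    using assms(3,4) by (auto simp: K_set_def Nx_def Ny_def algebra_simps)
qed

lemma card_ordered_pairs_le:
  fixes C :: "'a::linorder set"
  assumes "finite C"
  shows "2 * card {(x, y). x \<in> C \<and> y \<in> C \<and> x < y} \<le> (card C)\<^sup>2"
proof -
  define P where "P = {(x, y). x \<in> C \<and> y \<in> C \<and> x < y}"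
  have "finite P"
    using assms by (auto intro: finite_subset[of _ "C \<times> C"] simp: P_def)
  moreover have "P \<inter> prod.swap ` P = {}"
    by (auto simp: P_def)
  moreover have "card (prod.swap ` P) = card P"
    by (intro card_image) (auto simp: inj_on_def)
  ultimately have "2 * card P = card (P \<union> prod.swap ` P)"
    by (simp add: card_Un_disjoint)
  also have "\<dots> \<le> card (C \<times> C)"
    using assms by (intro card_mono) (auto simp: P_def)
  finally show ?thesis
    by (simp add: P_def card_cartesian_product power2_eq_square)
qed

lemma in_one_component_mono:
  assumes "S \<subseteq> S'" "in_one_component E S X"
  shows "in_one_component E S' X"
proof -
  have "(\<lambda>u v. u \<in> S \<and> v \<in> S \<and> E u v)\<^sup>*\<^sup>* x y \<Longrightarrow> (\<lambda>u v. u \<in> S' \<and> v \<in> S' \<and> E u v)\<^sup>*\<^sup>* x y"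
    for x y
    using mono_rtranclp[of "\<lambda>u v. u \<in> S \<and> v \<in> S \<and> E u v" "\<lambda>u v. u \<in> S' \<and> v \<in> S' \<and> E u v"]
      assms(1) by blast
  with assms show ?thesis
    unfolding in_one_component_def by blast
qed

lemma in_one_component_if_common_nbrs:
  fixes X :: "'a::linorder set"
  assumes sym: "\<And>u v. E u v \<Longrightarrow> E v u" and "X \<subseteq> S"
    and common: "\<And>x y. x \<in> X \<Longrightarrow> y \<in> X \<Longrightarrow> x < y \<Longrightarrow> \<exists>z\<in>S. E x z \<and> E y z"
  shows "in_one_component E S X"
proof -
  define R where "R u v \<longleftrightarrow> u \<in> S \<and> v \<in> S \<and> E u v" for u v
  have path: "R\<^sup>*\<^sup>* x y \<and> R\<^sup>*\<^sup>* y x" if xy: "x \<in> X" "y \<in> X" "x < y" for x y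
  proof -
    obtain z where "z \<in> S" "E x z" "E y z"
      using common[OF xy] by blast
    then have "R x z" "R z y" "R y z" "R z x"
      using xy \<open>X \<subseteq> S\<close> sym by (auto simp: R_def)
    then show ?thesis
      by (meson converse_rtranclp_into_rtranclp r_into_rtranclp)
  qed
  have "R\<^sup>*\<^sup>* x y" if "x \<in> X" "y \<in> X" for x y
    using path[of x y] path[of y x] that by (cases x y rule: linorder_cases) auto
  with \<open>X \<subseteq> S\<close> show ?thesis
    unfolding in_one_component_def R_def[abs_def] by blast
qed

lemma prob_pair_without_common_nbr_le:
  assumes G: "simple_graph V E" and DV: "D \<subseteq> V" and q: "0 \<le> q" "q \<le> 1"
    and x: "x \<in> K_set V E \<eta> D \<inter> D" and y: "y \<in> K_set V E \<eta> D \<inter> D" and "x \<noteq> y"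
  shows "measure_pmf.prob (Pi_pmf V False (\<lambda>_. bernoulli_pmf q))
           {f. f x \<and> f y \<and> (\<forall>z\<in>D. E x z \<longrightarrow> E y z \<longrightarrow> \<not> f z)}
         \<le> q\<^sup>2 * exp (- q * ((1 - 2 * \<eta>) * real (card D)))"
proof -
  define Z where "Z = {z \<in> D. E x z \<and> E y z}"
  have finV: "finite V" and irrefl: "\<And>v. \<not> E v v"
    using G by (auto simp: simple_graph_def)
  have finD: "finite D"
    using DV finV by (rule finite_subset)
  have "{x, y} \<subseteq> V" "Z \<subseteq> V" "{x, y} \<inter> Z = {}"
    using x y DV irrefl by (auto simp: Z_def)
  then have "measure_pmf.prob (Pi_pmf V False (\<lambda>_. bernoulli_pmf q))
               {f. (\<forall>w\<in>{x, y}. f w) \<and> (\<forall>z\<in>Z. \<not> f z)} = q ^ card {x, y} * (1 - q) ^ card Z"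
    by (intro prob_Pi_bernoulli_forced finV q)
  also have "{f. (\<forall>w\<in>{x, y}. f w) \<and> (\<forall>z\<in>Z. \<not> f z)}
           = {f. f x \<and> f y \<and> (\<forall>z\<in>D. E x z \<longrightarrow> E y z \<longrightarrow> \<not> f z)}"
    by (auto simp: Z_def)
  also have "card {x, y} = 2"
    using \<open>x \<noteq> y\<close> by simp
  also have "q\<^sup>2 * (1 - q) ^ card Z \<le> q\<^sup>2 * exp (- q * real (card Z))"
    using q by (intro mult_left_mono one_minus_power_le_exp) auto
  also have "\<dots> \<le> q\<^sup>2 * exp (- q * ((1 - 2 * \<eta>) * real (card D)))"
    using card_common_nbrs_K_set[OF finD DV, of x E \<eta> y] x y q(1)
    by (auto simp: Z_def intro!: mult_left_mono)
  finally show ?thesis .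
qed

lemma prob_not_in_one_component_le:
  fixes V :: "'a::linorder set"
  assumes G: "simple_graph V E" and DV: "D \<subseteq> V" and q: "0 \<le> q" "q \<le> 1"
  shows "1 - measure_pmf.prob (Pi_pmf V False (\<lambda>_. bernoulli_pmf q))
             {f. in_one_component E {v \<in> V. f v} ({v \<in> V. f v} \<inter> (K_set V E \<eta> D \<inter> D))}
         \<le> (real (card D))\<^sup>2 / 2 * q\<^sup>2 * exp (- q * ((1 - 2 * \<eta>) * real (card D)))"
proof -
  let ?M = "Pi_pmf V False (\<lambda>_. bernoulli_pmf q)"
  let ?bound = "q\<^sup>2 * exp (- q * ((1 - 2 * \<eta>) * real (card D)))"
  define C where "C = K_set V E \<eta> D \<inter> D"
  define Good where "Good = {f. in_one_component E {v \<in> V. f v} ({v \<in> V. f v} \<inter> C)}"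
  define Bad where "Bad x y = {f. f x \<and> f y \<and> (\<forall>z\<in>D. E x z \<longrightarrow> E y z \<longrightarrow> \<not> f z)}" for x y
  define P where "P = {(x, y). x \<in> C \<and> y \<in> C \<and> x < y}"
  have sym: "\<And>u v. E u v \<Longrightarrow> E v u" and finC: "finite C"
    using G DV by (auto simp: simple_graph_def C_def intro: finite_subset)
  have finP: "finite P"
    using finC by (auto simp: P_def intro: finite_subset[of _ "C \<times> C"])
  have "f \<in> Good" if nbad: "f \<notin> \<Union> (case_prod Bad ` P)" for f
    unfolding Good_def mem_Collect_eq
  proof (rule in_one_component_if_common_nbrs[OF sym])
    fix x y assume "x \<in> {v \<in> V. f v} \<inter> C" "y \<in> {v \<in> V. f v} \<inter> C" "x < y"
    then have "(x, y) \<in> P" "f x" "f y"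
      by (auto simp: P_def)
    moreover from this(1) nbad have "f \<notin> Bad x y"
      by blast
    ultimately show "\<exists>z\<in>{v \<in> V. f v}. E x z \<and> E y z"
      using DV by (auto simp: Bad_def)
  qed auto
  then have "measure_pmf.prob ?M (UNIV - Good) \<le> measure_pmf.prob ?M (\<Union> (case_prod Bad ` P))"
    by (intro measure_pmf.finite_measure_mono) auto
  then have "1 - measure_pmf.prob ?M Good \<le> measure_pmf.prob ?M (\<Union> (case_prod Bad ` P))"
    using measure_pmf.prob_compl[of Good ?M] by simp
  also have "\<dots> \<le> (\<Sum>xy\<in>P. measure_pmf.prob ?M (case_prod Bad xy))"
    using finP by (intro measure_pmf.finite_measure_subadditive_finite) auto
  also have "\<dots> \<le> (\<Sum>xy\<in>P. ?bound)"
  proof (rule sum_mono, clarify)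
    fix x y assume "(x, y) \<in> P"
    then show "measure_pmf.prob ?M (Bad x y) \<le> ?bound"
      unfolding Bad_def by (intro prob_pair_without_common_nbr_le G DV q) (auto simp: P_def C_def)
  qed
  also have "\<dots> \<le> (real (card D))\<^sup>2 / 2 * ?bound"
  proof -
    have "2 * card P \<le> (card C)\<^sup>2"
      unfolding P_def using finC by (rule card_ordered_pairs_le)
    also have "\<dots> \<le> (card D)\<^sup>2"
      using finC DV G by (auto simp: C_def simple_graph_def intro!: power_mono card_mono
          intro: finite_subset)
    finally have "real (card P) \<le> (real (card D))\<^sup>2 / 2"
      by (simp flip: of_nat_power)
    then show ?thesis
      unfolding sum_constant by (rule mult_right_mono) simp
  qed
  finally show ?thesis
    by (simp add: Good_def C_def)
qed

lemma square_le_exp: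
  fixes t :: real
  assumes "t \<ge> 0"
  shows "t\<^sup>2 / 8 \<le> exp (t / 3)"
proof -
  define y where "y = t / 6"
  have y: "y \<ge> 0"
    using assms by (simp add: y_def)
  have "213/100 * y \<le> 1 + y + y\<^sup>2 / 2"
    using zero_le_power2[of "y - 113/100"] by (simp add: power2_eq_square algebra_simps)
  also have "\<dots> \<le> exp y"
    using exp_lower_Taylor_quadratic[OF y] .
  finally have "(213/100 * y)\<^sup>2 \<le> (exp y)\<^sup>2"
    using y by (intro power_mono) auto
  moreover have "(exp y)\<^sup>2 = exp (t / 3)"
    by (simp add: y_def power2_eq_square exp_add[symmetric])
  moreover have "t\<^sup>2 / 8 \<le> (213/100 * y)\<^sup>2"
    by (simp add: y_def power2_eq_square)
  ultimately show ?thesis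
    by linarith
qed

lemma union_bound_le_exp:
  fixes m p \<eta> :: real
  assumes "0 \<le> m" "0 \<le> p" "\<eta> \<le> 1/9"
  shows "m\<^sup>2 / 2 * (p / 2)\<^sup>2 * exp (- (p / 2) * ((1 - 2 * \<eta>) * m)) \<le> exp (- p * m / 18)"
proof -
  have "7 / 9 * m \<le> (1 - 2 * \<eta>) * m"
    using assms by (intro mult_right_mono) auto
  then have "p / 2 * (7 / 9 * m) \<le> p / 2 * ((1 - 2 * \<eta>) * m)"
    using assms(2) by (intro mult_left_mono) auto
  then have exp_le: "exp (- (p / 2) * ((1 - 2 * \<eta>) * m)) \<le> exp (- (7 / 18) * (p * m))"
    by (simp add: algebra_simps)
  have coeff: "m\<^sup>2 / 2 * (p / 2)\<^sup>2 = (p * m)\<^sup>2 / 8"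
    by (simp add: power2_eq_square)
  have "m\<^sup>2 / 2 * (p / 2)\<^sup>2 * exp (- (p / 2) * ((1 - 2 * \<eta>) * m))
      \<le> (p * m)\<^sup>2 / 8 * exp (- (7 / 18) * (p * m))"
    unfolding coeff by (rule mult_left_mono[OF exp_le]) simp
  also have "\<dots> \<le> exp (p * m / 3) * exp (- (7 / 18) * (p * m))"
    using square_le_exp[of "p * m"] assms by (intro mult_right_mono) auto
  also have "\<dots> = exp (- p * m / 18)"
    by (simp add: exp_add[symmetric])
  finally show ?thesis .
qed

lemma prob_le_prob_pair_pmf_fst:
  assumes "fst -` X \<subseteq> Y"
  shows "measure_pmf.prob A X \<le> measure_pmf.prob (pair_pmf A B) Y"
proof -
  have "measure_pmf.prob A X = measure_pmf.prob (map_pmf fst (pair_pmf A B)) X"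
    by (simp add: map_fst_pair_pmf)
  also have "\<dots> = measure_pmf.prob (pair_pmf A B) (fst -` X)"
    by (rule measure_map_pmf)
  also have "\<dots> \<le> measure_pmf.prob (pair_pmf A B) Y"
    using assms by (intro measure_pmf.finite_measure_mono) auto
  finally show ?thesis .
qed

theorem lemma5p5:
  "\<exists>c::real. c > 0 \<and>
    (\<forall>(V :: nat set) E \<epsilon> \<delta> p D.
      simple_graph V E \<longrightarrow> 0 < \<epsilon> \<longrightarrow> \<epsilon> < 1/3 \<longrightarrow> \<delta> > 0 \<longrightarrow> 0 < p \<longrightarrow> p < 1 \<longrightarrow>
      D \<subseteq> V \<longrightarrow> near_clique E (\<epsilon>^3) D \<longrightarrow> real (card D) \<ge> \<delta> * real (card V) \<longrightarrow>
      (let n = card V;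
           C = K_set V E (\<epsilon>^2) D \<inter> D;
           p1 = p / 2;
           p2 = (p - p1) / (1 - p1);
           M = pair_pmf (Pi_pmf V False (\<lambda>_. bernoulli_pmf p1))
                        (Pi_pmf V False (\<lambda>_. bernoulli_pmf p2))
       in measure_pmf.prob M
            {(f, g). in_one_component E ({v \<in> V. f v} \<union> {v \<in> V. g v}) ({v \<in> V. f v} \<inter> C)}
          \<ge> 1 - exp (- c * \<delta> * p * real n)))"
proof (rule exI[of _ "1/18"], unfold Let_def, intro conjI allI impI)
  fix V :: "nat set" and E and \<epsilon> \<delta> p :: real and D
  assume G: "simple_graph V E" and \<epsilon>: "0 < \<epsilon>" "\<epsilon> < 1/3" and "\<delta> > 0" and p: "0 < p" "p < 1"
    and DV: "D \<subseteq> V" and "near_clique E (\<epsilon>^3) D" and D_large: "real (card D) \<ge> \<delta> * real (card V)"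
  let ?S\<^sub>1 = "Pi_pmf V False (\<lambda>_. bernoulli_pmf (p / 2))"
  let ?S\<^sub>2 = "Pi_pmf V False (\<lambda>_. bernoulli_pmf ((p - p / 2) / (1 - p / 2)))"
  let ?C = "K_set V E (\<epsilon>\<^sup>2) D \<inter> D"
  let ?Good = "{(f, g). in_one_component E ({v \<in> V. f v} \<union> {v \<in> V. g v}) ({v \<in> V. f v} \<inter> ?C)}"
  let ?Good\<^sub>1 = "{f. in_one_component E {v \<in> V. f v} ({v \<in> V. f v} \<inter> ?C)}"
  have "\<epsilon>\<^sup>2 \<le> 1/9"
    using power_mono[of \<epsilon> "1/3" 2] \<epsilon> by (simp add: power2_eq_square)
  have "1 - measure_pmf.prob ?S\<^sub>1 ?Good\<^sub>1
      \<le> (real (card D))\<^sup>2 / 2 * (p / 2)\<^sup>2 * exp (- (p / 2) * ((1 - 2 * \<epsilon>\<^sup>2) * real (card D)))"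
    using p by (intro prob_not_in_one_component_le G DV) auto
  also have "\<dots> \<le> exp (- p * real (card D) / 18)"
    using p \<open>\<epsilon>\<^sup>2 \<le> 1/9\<close> by (intro union_bound_le_exp) auto
  also have "\<dots> \<le> exp (- (1/18) * \<delta> * p * real (card V))"
    using mult_right_mono[OF D_large, of p] p by (simp add: algebra_simps)
  moreover have "measure_pmf.prob ?S\<^sub>1 ?Good\<^sub>1 \<le> measure_pmf.prob (pair_pmf ?S\<^sub>1 ?S\<^sub>2) ?Good"
    by (rule prob_le_prob_pair_pmf_fst) (force intro: in_one_component_mono[rotated])
  ultimately show "1 - exp (- (1/18) * \<delta> * p * real (card V)) \<le> measure_pmf.prob (pair_pmf ?S\<^sub>1 ?S\<^sub>2) ?Good"
    by linarith
qed simp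

end
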